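(* With the notation of the context, let $\alpha_{\bullet,\bullet}=(\alpha_{i,j})_{1\le i\le m,1\le j\le n}$ be an integer matrix and $\mathcal{P}_{\alpha_{\bullet,\bullet}}=\{(V_1,\ldots,V_n)\in\mathcal{A}: \dim(V_j\cap\ker x^i)=\alpha_{i,j}\ \forall i,j\}$. The following are equivalent: (i) $\mathcal{A}_x\cap\mathcal{P}_{\alpha_{\bullet,\bullet}}\neq\emptyset$; (ii) $\mathcal{A}_x^s\cap\mathcal{P}_{\alpha_{\bullet,\bullet}}\neq\emptyset$; (iii) $\alpha_{\bullet,\bullet}$ satisfies, with $l_i=\dim\ker x^i$ ($l_0=0$) and the convention $\alpha_{0,j}=0$: (1) $0\le\alpha_{i,j}\le\alpha_{i',j'}$ whenever $i\le i'$, $j\le j'$, and $\alpha_{m,j}=k_j$ for all $j$; (2) $\alpha_{i',j'}-\alpha_{i'-1,j'}\le\alpha_{i,j}-\alpha_{i-1,j}\le\alpha_{1,j}$ whenever $2\le i\le i'$ and $j'\le j$; (3) $\alpha_{i,j}-\alpha_{i-1,j}\le l_i-l_{i-1}$ for $2\le i\le m$ and all $j$, and $\alpha_{1,j}\le l_1$ for all $j$.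
   Context: $\mathbb{K}$ is an algebraically closed field of characteristic zero. $A$ is a $d$-dimensional $\mathbb{K}$-vector space, $k_\bullet=(k_1\le\cdots\le k_n)$ with $k_i\in\{0,\ldots,d\}$, and $\mathcal{A}=\mathcal{F}_{k_\bullet}(A)$ is the variety of partial flags $V_1\subset\cdots\subset V_n\subset A$ with $\dim V_j=k_j$. $x\in\mathrm{End}(A)$ is nilpotent with nilpotency order $m$ (least $m$ with $x^m=0$), and $\mathcal{A}_x=\{(V_j)\in\mathcal{A}: x(V_j)\subset V_j\ \forall j\}$. $P\subset G=GL(A)$ is the parabolic subgroup stabilizing each $\ker x^i$; $s\in P$ is a semisimple element with $Z_G(s)$ a Levi subgroup of $P$ and $sxs^{-1}=qx$ for some $q\in\mathbb{K}^*$; $\mathcal{A}_x^s$ is the $s$-fixed point set of $\mathcal{A}_x$. Every $P$-orbit of $\mathcal{A}$ is of the form $\mathcal{P}_{\alpha_{\bullet,\bullet}}$. *)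

theory Defs
  imports "HOL-Analysis.Analysis" "HOL-Computational_Algebra.Polynomial"
begin

text \<open>A = K^d is modelled as the type 'a^'d, with d = CARD('d);
  endomorphisms of A are square matrices 'a^'d^'d acting by (*v).\<close>

definition matpow :: "'a::semiring_1^'d^'d \<Rightarrow> nat \<Rightarrow> 'a^'d^'d" where
  "matpow x i = (((**) x) ^^ i) (mat 1)"

definition kerpow :: "'a::field^'d^'d \<Rightarrow> nat \<Rightarrow> ('a^'d) set" where
  "kerpow x i = {v. matpow x i *v v = 0}"

definition nilp_order :: "'a::field^'d^'d \<Rightarrow> nat \<Rightarrow> bool" where
  "nilp_order x m \<longleftrightarrow> matpow x m = 0 \<and> (\<forall>i<m. matpow x i \<noteq> 0)"

definition flag_variety :: "nat \<Rightarrow> (nat \<Rightarrow> nat) \<Rightarrow> (nat \<Rightarrow> ('a::field^'d) set) set" where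
  "flag_variety n k = {V.
     (\<forall>j\<in>{1..n}. vec.subspace (V j) \<and> vec.dim (V j) = k j) \<and>
     (\<forall>j. 1 \<le> j \<and> j < n \<longrightarrow> V j \<subseteq> V (Suc j)) \<and>
     (\<forall>j. j \<notin> {1..n} \<longrightarrow> V j = {0})}"

definition stable_flags :: "nat \<Rightarrow> (nat \<Rightarrow> nat) \<Rightarrow> 'a::field^'d^'d \<Rightarrow> (nat \<Rightarrow> ('a^'d) set) set" where
  "stable_flags n k x = {V \<in> flag_variety n k. \<forall>j\<in>{1..n}. (\<lambda>v. x *v v) ` V j \<subseteq> V j}"

definition fixed_flags :: "'a::field^'d^'d \<Rightarrow> (nat \<Rightarrow> ('a^'d) set) set \<Rightarrow> (nat \<Rightarrow> ('a^'d) set) set" where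
  "fixed_flags g S = {V \<in> S. \<forall>j. (\<lambda>v. g *v v) ` V j = V j}"

definition GLA :: "('a::field^'d^'d) set" where
  "GLA = {g. invertible g}"

definition parabolic_of :: "'a::field^'d^'d \<Rightarrow> ('a^'d^'d) set" where
  "parabolic_of x = {g \<in> GLA. \<forall>i. (\<lambda>v. g *v v) ` kerpow x i = kerpow x i}"

text \<open>Levi subgroups of P (the stabiliser of the flag 0 = ker x^0 \<subseteq> ker x^1 \<subseteq> ... \<subseteq> ker x^m = A):
  stabilisers in GLA(A) of a splitting A = U_1 \<oplus> ... \<oplus> U_m adapted to the flag,
  i.e. ker x^i = ker x^(i-1) \<oplus> U_i for 1 \<le> i \<le> m.\<close>
definition levi_subgroup_of :: "'a::field^'d^'d \<Rightarrow> nat \<Rightarrow> ('a^'d^'d) set \<Rightarrow> bool" where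
  "levi_subgroup_of x m L \<longleftrightarrow>
    (\<exists>U :: nat \<Rightarrow> ('a^'d) set.
       (\<forall>i\<in>{1..m}. vec.subspace (U i) \<and> U i \<inter> kerpow x (i - 1) = {0} \<and>
                    {u + w | u w. u \<in> U i \<and> w \<in> kerpow x (i - 1)} = kerpow x i) \<and>
       L = {g \<in> GLA. \<forall>i\<in>{1..m}. (\<lambda>v. g *v v) ` U i = U i})"

definition centralizer :: "'a::field^'d^'d \<Rightarrow> ('a^'d^'d) set" where
  "centralizer s = {g \<in> GLA. g ** s = s ** g}"

definition semisimple_elt :: "'a::field^'d^'d \<Rightarrow> bool" where
  "semisimple_elt s \<longleftrightarrow> invertible s \<and>
     (\<exists>(Q::'a^'d^'d) (D::'a^'d^'d). invertible Q \<and> (\<forall>i j. i \<noteq> j \<longrightarrow> D $ i $ j = 0) \<and> s = Q ** D ** matrix_inv Q)"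

definition P_alpha :: "nat \<Rightarrow> (nat \<Rightarrow> nat) \<Rightarrow> 'a::field^'d^'d \<Rightarrow> nat \<Rightarrow> (nat \<Rightarrow> nat \<Rightarrow> int)
                        \<Rightarrow> (nat \<Rightarrow> ('a^'d) set) set" where
  "P_alpha n k x m \<alpha> = {V \<in> flag_variety n k.
      \<forall>i\<in>{1..m}. \<forall>j\<in>{1..n}. int (vec.dim (V j \<inter> kerpow x i)) = \<alpha> i j}"

end

theory Submission imports Defs begin

(* Write K i = ker x^i.
   Necessity: for an x-stable subspace V the increments dim(V \<inter> K i) - dim(V \<inter> K (i-1))
   are antitone in i (x injects V \<inter> K (i+1) modulo V \<inter> K i into V \<inter> K i modulo V \<inter> K (i-1)),
   and they grow with V (submodularity of dim); applied to the flag members V_j and to V = A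
   this gives conditions (1)-(3), collected below in the predicate  admissible.
   Sufficiency: the Levi subgroup Z_G(s) is the stabiliser of a splitting K i = U i \<oplus> K (i-1).
   Testing commutation with s against transvections adapted to the splitting shows that s acts
   on each U i by a scalar, with distinct scalars on distinct U i; together with s x s^-1 = q x
   this forces x (U i) \<subseteq> U (i-1).  Given admissible alpha one chooses nested subspaces
   W i j \<subseteq> U i of dimension alpha i j - alpha (i-1) j with x (W i j) \<subseteq> W (i-1) j, by a
   descending construction; V_j = W 1 j + ... + W m j is then an x-stable, s-fixed flag in
   P_alpha.  Since s-fixed x-stable flags are x-stable, the three conditions are equivalent. *)

abbreviation ssum :: "('a::field^'d) set \<Rightarrow> ('a^'d) set \<Rightarrow> ('a^'d) set" where
  "ssum P Q \<equiv> {u + w | u w. u \<in> P \<and> w \<in> Q}"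

lemma ssum_comm: "ssum P Q = ssum Q P"
  by (auto; metis add.commute)

lemma dim_direct_sum:
  fixes P Q :: "('a::field^'d) set"
  assumes "vec.subspace P" "vec.subspace Q" "P \<inter> Q \<subseteq> {0}"
  shows "vec.dim (ssum P Q) = vec.dim P + vec.dim Q"
proof -
  have "vec.dim (P \<inter> Q) = 0" using assms(3) vec.dim_eq_0 by blast
  moreover have "vec.dim (ssum P Q) + vec.dim (P \<inter> Q) = vec.dim P + vec.dim Q"
    by (rule vec.dim_sums_Int[OF assms(1,2)])
  ultimately show ?thesis by linarith
qed

lemma subspace_between:
  fixes Y Z :: "('a::field^'d) set"
  assumes "vec.subspace Y" "vec.subspace Z" "Y \<subseteq> Z" "vec.dim Y \<le> c" "c \<le> vec.dim Z"
  obtains W where "vec.subspace W" "Y \<subseteq> W" "W \<subseteq> Z" "vec.dim W = c"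
proof -
  obtain B where B: "B \<subseteq> Y" "vec.independent B" "Y \<subseteq> vec.span B" "card B = vec.dim Y"
    using vec.basis_exists by blast
  obtain C where C: "B \<subseteq> C" "C \<subseteq> Z" "vec.independent C" "Z \<subseteq> vec.span C"
    using vec.maximal_independent_subset_extend[of B Z] B assms(3) by blast
  have fC: "finite C" and fB: "finite B"
    using C(3) B(2) vec.finiteI_independent by blast+
  have "vec.span C = Z" using vec.span_minimal[OF C(2) assms(2)] C(4) by blast
  then have cC: "card C = vec.dim Z" using vec.dim_span_eq_card_independent[OF C(3)] by simp
  have "c - card B \<le> card (C - B)" using cC B(4) assms fC fB C(1) by (simp add: card_Diff_subset)
  then obtain E where E: "E \<subseteq> C - B" "card E = c - card B"
    using obtain_subset_with_card_n by metis
  have iBE: "vec.independent (B \<union> E)" using vec.independent_mono[OF C(3)] E C(1) by blast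
  have cBE: "card (B \<union> E) = c"
    using E fB finite_subset[OF _ fC] B(4) assms(4) by (subst card_Un_disjoint) auto
  show ?thesis
  proof
    show "vec.subspace (vec.span (B \<union> E))" by simp
    show "Y \<subseteq> vec.span (B \<union> E)" using B(3) vec.span_mono[of B "B \<union> E"] by auto
    show "vec.span (B \<union> E) \<subseteq> Z" using vec.span_minimal[of "B \<union> E" Z] E C assms(2) by auto
    show "vec.dim (vec.span (B \<union> E)) = c"
      using vec.dim_span_eq_card_independent[OF iBE] cBE by simp
  qed
qed

lemma complement_exists:
  fixes P T :: "('a::field^'d) set"
  assumes "vec.subspace P" "vec.subspace T" "P \<subseteq> T"
  obtains Q where "vec.subspace Q" "Q \<subseteq> T" "P \<inter> Q \<subseteq> {0}" "vec.dim P + vec.dim Q = vec.dim T"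
proof -
  obtain B where B: "B \<subseteq> P" "vec.independent B" "P \<subseteq> vec.span B" "card B = vec.dim P"
    using vec.basis_exists by blast
  obtain C where C: "B \<subseteq> C" "C \<subseteq> T" "vec.independent C" "T \<subseteq> vec.span C"
    using vec.maximal_independent_subset_extend[of B T] B assms(3) by blast
  have fC: "finite C" using C(3) vec.finiteI_independent by blast
  have spanC: "vec.span C = T" using vec.span_minimal[OF C(2) assms(2)] C(4) by blast
  have spanB: "vec.span B = P" using vec.span_minimal[OF B(1) assms(1)] B(3) by blast
  define Q where "Q = vec.span (C - B)"
  have sQ: "vec.subspace Q" unfolding Q_def by simp
  have QT: "Q \<subseteq> T" unfolding Q_def using vec.span_mono[of "C - B" C] spanC by blast
  have "vec.span C = ssum P Q"
    unfolding spanB[symmetric] Q_def vec.span_Un[symmetric] using C(1) by (simp add: Un_absorb1)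
  then have sum: "ssum P Q = T" using spanC by simp
  have dimQ: "vec.dim Q = card C - card B"
    unfolding Q_def using vec.dim_span_eq_card_independent[OF vec.independent_mono[OF C(3)]]
      card_Diff_subset[OF finite_subset[OF C(1) fC] C(1)] by auto
  have "vec.dim P + vec.dim Q = vec.dim T"
    using dimQ B(4) spanC vec.dim_span_eq_card_independent[OF C(3)] card_mono[OF fC C(1)] by simp
  moreover have "P \<inter> Q \<subseteq> {0}"
  proof -
    have "vec.dim T + vec.dim (P \<inter> Q) = vec.dim P + vec.dim Q"
      using vec.dim_sums_Int[OF assms(1) sQ] sum by simp
    then have "vec.dim (P \<inter> Q) = 0" using calculation by simp
    then show ?thesis by (subst vec.dim_eq_0[symmetric])
  qed
  ultimately show ?thesis using that sQ QT by blast
qed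

lemma independent_Un_direct:
  fixes S T :: "('a::field^'d) set"
  assumes "vec.independent S" "vec.independent T" "vec.span S \<inter> vec.span T \<subseteq> {0}"
  shows "vec.independent (S \<union> T)"
proof -
  have fS: "finite S" "finite T" using assms vec.finiteI_independent by blast+
  have "0 \<notin> S" using assms(1) vec.dependent_zero by blast
  then have disj: "S \<inter> T = {}" using assms(3) vec.span_base by blast
  have "vec.dim (vec.span (S \<union> T)) = vec.dim (ssum (vec.span S) (vec.span T))"
    by (simp add: vec.span_Un)
  also have "\<dots> = card S + card T"
    using dim_direct_sum[of "vec.span S" "vec.span T"] assms
    by (simp add: vec.dim_eq_card_independent)
  finally have "vec.dim (vec.span (S \<union> T)) = card (S \<union> T)"
    using card_Un_disjoint[OF fS disj] by simp
  then show ?thesis using vec.span_superset[of "S \<union> T"] fS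
    by (intro vec.card_le_dim_spanning[of "S \<union> T" "vec.span (S \<union> T)"]) auto
qed

lemma independent_single:
  fixes u :: "'a::field^'d"
  shows "u \<noteq> 0 \<Longrightarrow> vec.independent {u}"
  using vec.independent_insertI[of u "{}"] by (simp add: vec.span_empty vec.independent_empty)

lemma dim_Int_submodular:
  fixes W V A B :: "('a::field^'d) set"
  assumes "vec.subspace W" "vec.subspace V" "vec.subspace A" "vec.subspace B" "W \<subseteq> V" "A \<subseteq> B"
  shows "vec.dim (W \<inter> B) + vec.dim (V \<inter> A) \<le> vec.dim (V \<inter> B) + vec.dim (W \<inter> A)"
proof -
  have sWB: "vec.subspace (W \<inter> B)" and sVA: "vec.subspace (V \<inter> A)"
    using vec.subspace_inter assms by blast+
  have "ssum (W \<inter> B) (V \<inter> A) \<subseteq> V \<inter> B"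
    using assms(5,6) vec.subspace_add[OF assms(2)] vec.subspace_add[OF assms(4)] by blast
  then have "vec.dim (ssum (W \<inter> B) (V \<inter> A)) \<le> vec.dim (V \<inter> B)" by (rule vec.dim_subset)
  moreover have "(W \<inter> B) \<inter> (V \<inter> A) = W \<inter> A" using assms(5,6) by blast
  ultimately show ?thesis using vec.dim_sums_Int[OF sWB sVA] by simp
qed

lemma invertible_image_eq:
  fixes g :: "'a::field^'d^'d"
  assumes "invertible g" "vec.subspace W" "(\<lambda>v. g *v v) ` W \<subseteq> W"
  shows "(\<lambda>v. g *v v) ` W = W"
proof -
  have "inj ((*v) g)" using inj_matrix_vector_mult[OF assms(1)] .
  then have "vec.dim ((*v) g ` W) = vec.dim W"
    by (intro vec.dim_image_eq[OF matrix_vector_mul_linear_gen]) (auto simp: inj_on_def inj_def)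
  then show ?thesis
    using vec.subspace_dim_equal[OF vec.subspace_image[OF assms(2)] assms(2)] assms(3) by simp
qed

lemma matrix_image_span_subset:
  fixes g :: "'a::field^'d^'d"
  assumes "vec.subspace W" "\<And>b. b \<in> B \<Longrightarrow> g *v b \<in> W"
  shows "(\<lambda>v. g *v v) ` vec.span B \<subseteq> W"
  using vec.span_image[of g B] vec.span_minimal[of "(*v) g ` B" W] assms by auto

lemma matrix_eq_on_spanning:
  fixes A C :: "'a::field^'d^'d"
  assumes "vec.span B = UNIV" "\<And>b. b \<in> B \<Longrightarrow> A *v b = C *v b"
  shows "A = C"
proof -
  have "\<And>v. A *v v = C *v v"
    by (rule vec.linear_eq_on[OF matrix_vector_mul_linear_gen matrix_vector_mul_linear_gen, of _ B])
       (use assms in auto)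
  then show ?thesis by (simp add: matrix_eq)
qed

lemma unipotent_invertible:
  fixes D :: "'a::field^'d^'d"
  assumes "\<And>v. D *v (D *v v) = 0"
  shows "invertible (mat 1 + D)"
proof -
  have "v = 0" if "(mat 1 + D) *v v = 0" for v
  proof -
    have e: "v + D *v v = 0" using that by (simp add: matrix_vector_mult_add_rdistrib)
    then have "D *v (v + D *v v) = 0" by simp
    then have "D *v v = 0" using assms[of v] by (simp add: matrix_vector_right_distrib)
    then show "v = 0" using e by simp
  qed
  then show ?thesis using matrix_left_invertible_ker invertible_left_inverse by blast
qed

lemma transvection_exists:
  fixes BB :: "('a::field^'d) set"
  assumes BB: "vec.independent BB" and wu: "w \<in> BB" "u \<in> BB" "w \<noteq> u"
  obtains g where "invertible g" "g *v w = w + u" "\<And>b. b \<in> BB \<Longrightarrow> b \<noteq> w \<Longrightarrow> g *v b = b"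
proof -
  define f where "f b = (if b = w then u else 0)" for b
  define D where "D = matrix (vec.construct BB f)"
  have D_apply: "D *v v = vec.construct BB f v" for v
    unfolding D_def by (rule matrix_works[OF vec.linear_construct[OF BB]])
  have D_basis: "D *v b = f b" if "b \<in> BB" for b
    using D_apply vec.construct_basis[OF BB that] by simp
  have D_range: "D *v v \<in> vec.span {u}" for v
  proof -
    have "f ` BB \<subseteq> vec.span {u}" by (auto simp: f_def vec.span_base vec.span_zero)
    then have "vec.span (f ` BB) \<subseteq> vec.span {u}" by (simp add: vec.span_minimal)
    moreover have "vec.construct BB f v \<in> vec.span (f ` BB)" by (rule vec.construct_in_span[OF BB])
    ultimately show ?thesis unfolding D_apply by blast
  qed
  have Du: "D *v u = 0" using D_basis[OF wu(2)] wu(3) by (simp add: f_def)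
  have "D *v (D *v v) = 0" for v
    using D_range[of v] Du by (auto simp: vec.span_singleton vector_scalar_commute)
  then have "invertible (mat 1 + D)" by (rule unipotent_invertible)
  moreover have "(mat 1 + D) *v v = v + D *v v" for v by (simp add: matrix_vector_mult_add_rdistrib)
  ultimately show ?thesis using that D_basis wu(1) by (simp add: f_def)
qed

lemma matpow_0 [simp]: "matpow x 0 = mat 1" by (simp add: matpow_def)

lemma matpow_Suc: "matpow x (Suc i) = x ** matpow x i" by (simp add: matpow_def)

lemma matpow_Suc2: "matpow x (Suc i) = matpow x i ** x"
  by (induction i) (simp_all add: matpow_Suc matrix_mul_assoc)

lemma kerpow_0: "kerpow (x::'a::field^'d^'d) 0 = {0}"
  by (auto simp: kerpow_def)

lemma kerpow_Suc_iff: "v \<in> kerpow (x::'a::field^'d^'d) (Suc i) \<longleftrightarrow> x *v v \<in> kerpow x i"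
  by (simp add: kerpow_def matpow_Suc2 matrix_vector_mul_assoc[symmetric])

lemma kerpow_mono: "i \<le> j \<Longrightarrow> kerpow (x::'a::field^'d^'d) i \<subseteq> kerpow x j"
proof (induction j rule: dec_induct)
  case (step j)
  then show ?case by (auto simp: kerpow_def matpow_Suc matrix_vector_mul_assoc[symmetric])
qed simp

lemma kerpow_subspace: "vec.subspace (kerpow (x::'a::field^'d^'d) i)"
  unfolding kerpow_def by (rule vec.subspace_kernel)

lemma kerpow_1_iff: "v \<in> kerpow (x::'a::field^'d^'d) 1 \<longleftrightarrow> x *v v = 0"
  using kerpow_Suc_iff[of v x 0] by (simp add: kerpow_0)

text \<open>The nilpotency order is positive (the identity is nonzero) and K m is everything.\<close>
lemma nilp_order_pos: "nilp_order (x::'a::field^'d^'d) m \<Longrightarrow> 1 \<le> m"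
proof (cases m)
  case 0
  assume "nilp_order x m"
  then have "(mat 1 :: 'a^'d^'d) = 0" using 0 by (simp add: nilp_order_def)
  then have "(mat 1 :: 'a^'d^'d) $ undefined $ undefined = 0" by simp
  then show ?thesis by (simp add: mat_def)
qed simp

lemma kerpow_nilp_order: "nilp_order (x::'a::field^'d^'d) m \<Longrightarrow> kerpow x m = UNIV"
  by (auto simp: kerpow_def nilp_order_def)

definition ker_increment :: "'a::field^'d^'d \<Rightarrow> ('a^'d) set \<Rightarrow> nat \<Rightarrow> int" where
  "ker_increment x V i = int (vec.dim (V \<inter> kerpow x i)) - int (vec.dim (V \<inter> kerpow x (i - 1)))"

text \<open>On an x-stable subspace V, x maps a complement of V \<inter> K (i+1) in V \<inter> K (i+2) injectively
  into V \<inter> K (i+1), meeting V \<inter> K i trivially; hence the jumps decrease.\<close>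
lemma ker_increment_Suc_le:
  fixes V :: "('a::field^'d) set" and x :: "'a^'d^'d"
  assumes sV: "vec.subspace V" and xV: "(\<lambda>v. x *v v) ` V \<subseteq> V"
  shows "ker_increment x V (Suc (Suc i)) \<le> ker_increment x V (Suc i)"
proof -
  let ?T = "V \<inter> kerpow x (Suc (Suc i))" and ?S = "V \<inter> kerpow x (Suc i)" and ?R = "V \<inter> kerpow x i"
  have sT: "vec.subspace ?T" "vec.subspace ?S" "vec.subspace ?R"
    using vec.subspace_inter sV kerpow_subspace by blast+
  have "?S \<subseteq> ?T" using kerpow_mono[of "Suc i" "Suc (Suc i)" x] by auto
  then obtain Q where Q: "vec.subspace Q" "Q \<subseteq> ?T" "?S \<inter> Q \<subseteq> {0}"
      "vec.dim ?S + vec.dim Q = vec.dim ?T"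
    using complement_exists[OF sT(2) sT(1)] by blast
  have x_inj: "inj_on ((*v) x) (vec.span Q)"
  proof (rule vec.linear_inj_on_iff_eq_0[OF matrix_vector_mul_linear_gen, THEN iffD2])
    show "\<forall>a\<in>vec.span Q. x *v a = 0 \<longrightarrow> a = 0"
    proof (intro ballI impI)
      fix a assume a: "a \<in> vec.span Q" "x *v a = 0"
      then have "a \<in> Q" using Q(1) by (metis vec.span_eq_iff)
      moreover have "a \<in> kerpow x (Suc i)"
        using a(2) kerpow_1_iff[of a x] kerpow_mono[of 1 "Suc i" x] by auto
      ultimately show "a = 0" using Q(2,3) by blast
    qed
  qed simp
  have xQ_S: "(*v) x ` Q \<subseteq> ?S"
  proof
    fix z assume "z \<in> (*v) x ` Q"
    then obtain q where "q \<in> Q" "z = x *v q" by blast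
    then show "z \<in> ?S" using Q(2) xV kerpow_Suc_iff[of q x "Suc i"] by auto
  qed
  have xQ_R: "(*v) x ` Q \<inter> ?R \<subseteq> {0}"
  proof
    fix z assume z: "z \<in> (*v) x ` Q \<inter> ?R"
    then obtain q where q: "q \<in> Q" "z = x *v q" by blast
    then have "q \<in> ?S \<inter> Q" using z Q(2) kerpow_Suc_iff[of q x i] by auto
    then have "q = 0" using Q(3) by blast
    then show "z \<in> {0}" using q by simp
  qed
  have "ssum ((*v) x ` Q) ?R \<subseteq> ?S"
  proof
    fix z assume "z \<in> ssum ((*v) x ` Q) ?R"
    then obtain p r where pr: "z = p + r" "p \<in> (*v) x ` Q" "r \<in> ?R" by blast
    then have "p \<in> ?S" "r \<in> ?S" using xQ_S kerpow_mono[of i "Suc i" x] by auto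
    then show "z \<in> ?S" using pr(1) vec.subspace_add[OF sT(2)] by simp
  qed
  then have "vec.dim (ssum ((*v) x ` Q) ?R) \<le> vec.dim ?S" by (rule vec.dim_subset)
  moreover have "vec.dim (ssum ((*v) x ` Q) ?R) = vec.dim Q + vec.dim ?R"
    using dim_direct_sum[OF vec.subspace_image[OF Q(1)] sT(3) xQ_R]
      vec.dim_image_eq[OF matrix_vector_mul_linear_gen x_inj] by simp
  ultimately show ?thesis using Q(4) by (simp add: ker_increment_def)
qed

lemma ker_increment_antitone:
  fixes V :: "('a::field^'d) set" and x :: "'a^'d^'d"
  assumes "vec.subspace V" "(\<lambda>v. x *v v) ` V \<subseteq> V" "1 \<le> i" "i \<le> i'"
  shows "ker_increment x V i' \<le> ker_increment x V i"
  using assms(4,3)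
proof (induction i' rule: dec_induct)
  case (step p)
  then obtain p' where "p = Suc p'" by (cases p) auto
  then show ?case using step ker_increment_Suc_le[OF assms(1,2), of p'] by simp
qed simp

text \<open>The jumps grow with the subspace (submodularity of dimension).\<close>
lemma ker_increment_mono:
  fixes V W :: "('a::field^'d) set" and x :: "'a^'d^'d"
  assumes "vec.subspace W" "vec.subspace V" "W \<subseteq> V"
  shows "ker_increment x W i \<le> ker_increment x V i"
proof -
  have "vec.dim (W \<inter> kerpow x i) + vec.dim (V \<inter> kerpow x (i - 1))
      \<le> vec.dim (V \<inter> kerpow x i) + vec.dim (W \<inter> kerpow x (i - 1))"
    by (rule dim_Int_submodular[OF assms(1,2) kerpow_subspace kerpow_subspace assms(3) kerpow_mono])
      simp
  then show ?thesis by (simp add: ker_increment_def)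
qed

definition admissible :: "nat \<Rightarrow> nat \<Rightarrow> (nat \<Rightarrow> nat) \<Rightarrow> 'a::field^'d^'d \<Rightarrow> (nat \<Rightarrow> nat \<Rightarrow> int) \<Rightarrow> bool"
  where "admissible m n k x \<alpha> \<longleftrightarrow>
           (\<forall>i i' j j'. 1 \<le> i \<longrightarrow> i \<le> i' \<longrightarrow> i' \<le> m \<longrightarrow> 1 \<le> j \<longrightarrow> j \<le> j' \<longrightarrow> j' \<le> n \<longrightarrow>
                0 \<le> \<alpha> i j \<and> \<alpha> i j \<le> \<alpha> i' j') \<and>
            (\<forall>j\<in>{1..n}. \<alpha> m j = int (k j)) \<and>
            (\<forall>i i' j j'. 2 \<le> i \<longrightarrow> i \<le> i' \<longrightarrow> i' \<le> m \<longrightarrow> 1 \<le> j' \<longrightarrow> j' \<le> j \<longrightarrow> j \<le> n \<longrightarrow>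
                \<alpha> i' j' - \<alpha> (i' - 1) j' \<le> \<alpha> i j - \<alpha> (i - 1) j \<and>
                \<alpha> i j - \<alpha> (i - 1) j \<le> \<alpha> 1 j) \<and>
            (\<forall>i j. 2 \<le> i \<longrightarrow> i \<le> m \<longrightarrow> 1 \<le> j \<longrightarrow> j \<le> n \<longrightarrow>
                \<alpha> i j - \<alpha> (i - 1) j \<le> int (vec.dim (kerpow x i)) - int (vec.dim (kerpow x (i - 1)))) \<and>
            (\<forall>j\<in>{1..n}. \<alpha> 1 j \<le> int (vec.dim (kerpow x 1)))"

lemma flag_nested:
  assumes "V \<in> flag_variety n k" "1 \<le> j" "j \<le> j'" "j' \<le> n"
  shows "V j \<subseteq> V j'"
  using assms(3,4)
proof (induction j' rule: dec_induct)
  case (step p)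
  have "\<forall>j. 1 \<le> j \<and> j < n \<longrightarrow> V j \<subseteq> V (Suc j)" using assms(1) by (simp add: flag_variety_def)
  then have "V p \<subseteq> V (Suc p)" using step.hyps step.prems assms(2) by simp
  then show ?case using step.IH step.prems by simp
qed simp

lemma admissible_if_stable:
  fixes x :: "'a::field^'d^'d" and \<alpha> :: "nat \<Rightarrow> nat \<Rightarrow> int"
  assumes nil: "nilp_order x m" and VS: "V \<in> stable_flags n k x" and VP: "V \<in> P_alpha n k x m \<alpha>"
  shows "admissible m n k x \<alpha>"
proof -
  have VF: "V \<in> flag_variety n k" using VS by (simp add: stable_flags_def)
  have sub: "vec.subspace (V j)" "vec.dim (V j) = k j" "(\<lambda>v. x *v v) ` V j \<subseteq> V j"
    if "j \<in> {1..n}" for j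
    using VS that by (auto simp: stable_flags_def flag_variety_def)
  have alpha: "\<alpha> i j = int (vec.dim (V j \<inter> kerpow x i))" if "i \<in> {1..m}" "j \<in> {1..n}" for i j
    using VP that by (simp add: P_alpha_def)
  have alpha_1: "\<alpha> 1 j = ker_increment x (V j) 1" if "j \<in> {1..n}" for j
    using alpha[of 1 j] that nilp_order_pos[OF nil] by (simp add: ker_increment_def kerpow_0)
  have jump: "\<alpha> i j - \<alpha> (i - 1) j = ker_increment x (V j) i" if "2 \<le> i" "i \<le> m" "j \<in> {1..n}" for i j
  proof -
    have "i \<in> {1..m}" "i - 1 \<in> {1..m}" using that by auto
    then show ?thesis using alpha that(3) by (simp add: ker_increment_def)
  qed
  show ?thesis unfolding admissible_def
  proof (intro conjI allI impI ballI)
    fix i i' j j' :: nat assume h: "1 \<le> i" "i \<le> i'" "i' \<le> m" "1 \<le> j" "j \<le> j'" "j' \<le> n"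
    show "0 \<le> \<alpha> i j" using alpha[of i j] h by simp
    have "V j \<inter> kerpow x i \<subseteq> V j' \<inter> kerpow x i'"
      using flag_nested[OF VF, of j j'] kerpow_mono[of i i' x] h by auto
    then have "vec.dim (V j \<inter> kerpow x i) \<le> vec.dim (V j' \<inter> kerpow x i')" by (rule vec.dim_subset)
    then show "\<alpha> i j \<le> \<alpha> i' j'" using alpha[of i j] alpha[of i' j'] h by simp
  next
    fix j assume "j \<in> {1..n}"
    then show "\<alpha> m j = int (k j)"
      using alpha[of m j] sub kerpow_nilp_order[OF nil] nilp_order_pos[OF nil] by simp
  next
    fix i i' j j' :: nat assume h: "2 \<le> i" "i \<le> i'" "i' \<le> m" "1 \<le> j'" "j' \<le> j" "j \<le> n"
    then have jn: "j \<in> {1..n}" "j' \<in> {1..n}" by auto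
    have "ker_increment x (V j') i' \<le> ker_increment x (V j') i"
      using ker_increment_antitone[OF sub(1,3)[OF jn(2)]] h by simp
    also have "\<dots> \<le> ker_increment x (V j) i"
      using ker_increment_mono[OF sub(1)[OF jn(2)] sub(1)[OF jn(1)] flag_nested[OF VF]] h by simp
    finally show "\<alpha> i' j' - \<alpha> (i' - 1) j' \<le> \<alpha> i j - \<alpha> (i - 1) j"
      using jump h jn by simp
    show "\<alpha> i j - \<alpha> (i - 1) j \<le> \<alpha> 1 j"
      using ker_increment_antitone[OF sub(1,3)[OF jn(1)], of 1 i] jump[of i j] alpha_1[OF jn(1)] h
      by simp
  next
    fix i j :: nat assume h: "2 \<le> i" "i \<le> m" "1 \<le> j" "j \<le> n"
    then show "\<alpha> i j - \<alpha> (i - 1) j \<le> int (vec.dim (kerpow x i)) - int (vec.dim (kerpow x (i - 1)))"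
      using jump[of i j] ker_increment_mono[OF sub(1) vec.subspace_UNIV, of j x i]
      by (simp add: ker_increment_def)
  next
    fix j assume "j \<in> {1..n}"
    then show "\<alpha> 1 j \<le> int (vec.dim (kerpow x 1))"
      using alpha[of 1 j] vec.dim_subset[of "V j \<inter> kerpow x 1" "kerpow x 1"] nilp_order_pos[OF nil]
      by simp
  qed
qed

lemma conj_scalar_apply:
  fixes x s :: "'a::field^'d^'d"
  assumes "invertible s" "s ** x ** matrix_inv s = (\<chi> i j. q * x $ i $ j)"
  shows "s *v (x *v v) = q *s (x *v (s *v v))"
proof -
  have "matrix_inv s ** s = mat 1"
    using assms(1) unfolding invertible_def matrix_inv_def by (rule someI2_ex) simp
  then have "s ** x = (s ** x ** matrix_inv s) ** s" by (simp add: matrix_mul_assoc[symmetric])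
  then have "s ** x = (\<chi> i j. q * x $ i $ j) ** s" using assms(2) by simp
  then have "(s ** x) *v v = ((\<chi> i j. q * x $ i $ j) ** s) *v v" by simp
  moreover have "(\<chi> i j. q * x $ i $ j) *v w = q *s (x *v w)" for w
    by (simp add: matrix_vector_mult_def vec_eq_iff sum_distrib_left mult.assoc)
  ultimately show ?thesis by (simp add: matrix_vector_mul_assoc[symmetric])
qed

locale levi_splitting =
  fixes x s :: "'a::field^'d^'d" and m :: nat and U :: "nat \<Rightarrow> ('a^'d) set" and q :: 'a
  assumes nil: "nilp_order x m"
  and U_sub: "\<And>i. i \<in> {1..m} \<Longrightarrow> vec.subspace (U i)"
  and U_int: "\<And>i. i \<in> {1..m} \<Longrightarrow> U i \<inter> kerpow x (i - 1) = {0}"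
  and U_sum: "\<And>i. i \<in> {1..m} \<Longrightarrow> ssum (U i) (kerpow x (i - 1)) = kerpow x i"
  and centralizer_eq: "centralizer s = {g \<in> GLA. \<forall>i\<in>{1..m}. (\<lambda>v. g *v v) ` U i = U i}"
  and s_inv: "invertible s"
  and s_K: "\<And>i. (\<lambda>v. s *v v) ` kerpow x i = kerpow x i"
  and s_x: "\<And>v. s *v (x *v v) = q *s (x *v (s *v v))"
begin

abbreviation K where "K i \<equiv> kerpow x i"

lemma m_pos: "1 \<le> m"
  using nilp_order_pos[OF nil] .

lemma U_K: "i \<in> {1..m} \<Longrightarrow> U i \<subseteq> K i"
  using U_sum[of i] vec.subspace_0[OF kerpow_subspace, of x "i - 1"] by force

lemma U_0: "i \<in> {1..m} \<Longrightarrow> 0 \<in> U i"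
  using U_sub vec.subspace_0 by blast

lemma U_disjoint:
  assumes "i \<in> {1..m}" "t \<in> {1..m}" "t \<noteq> i" "u \<in> U t" "u \<in> U i"
  shows "u = 0"
proof -
  have lower: "u = 0" if "a \<in> {1..m}" "b \<in> {1..m}" "a < b" "u \<in> U a" "u \<in> U b" for a b
  proof -
    have "a \<le> b - 1" using that by simp
    then have "u \<in> K (b - 1)" using that U_K[of a] kerpow_mono[of a "b - 1" x] by blast
    then show ?thesis using U_int[of b] that by blast
  qed
  show ?thesis using assms lower[of t i] lower[of i t] by (cases "t < i") auto
qed

lemma dim_U: "i \<in> {1..m} \<Longrightarrow> vec.dim (U i) + vec.dim (K (i - 1)) = vec.dim (K i)"
  using dim_direct_sum[OF U_sub kerpow_subspace, of i x "i - 1"] U_int U_sum by simp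

lemma commute_iff_stabilises:
  assumes "invertible g"
  shows "g ** s = s ** g \<longleftrightarrow> (\<forall>i\<in>{1..m}. (\<lambda>v. g *v v) ` U i = U i)"
  using centralizer_eq assms by (auto simp: centralizer_def GLA_def set_eq_iff)

lemma s_U: "i \<in> {1..m} \<Longrightarrow> (\<lambda>v. s *v v) ` U i = U i"
  using commute_iff_stabilises[OF s_inv] by blast

lemma union_basis:
  assumes B: "\<And>t. t \<in> {1..m} \<Longrightarrow> vec.independent (B t) \<and> vec.span (B t) = U t"
  shows "p \<le> m \<Longrightarrow> vec.independent (\<Union>t\<in>{1..p}. B t) \<and> vec.span (\<Union>t\<in>{1..p}. B t) = K p"
proof (induction p)
  case 0
  then show ?case by (simp add: kerpow_0 vec.span_empty vec.independent_empty)
next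
  case (Suc p)
  let ?S = "\<Union>t\<in>{1..p}. B t"
  have IH: "vec.independent ?S" "vec.span ?S = K p" using Suc by auto
  have t: "Suc p \<in> {1..m}" using Suc.prems by simp
  have un: "(\<Union>t\<in>{1..Suc p}. B t) = ?S \<union> B (Suc p)"
    by (auto simp: atLeastAtMostSuc_conv)
  have "vec.span ?S \<inter> vec.span (B (Suc p)) \<subseteq> {0}"
    using IH(2) B[OF t] U_int[OF t] by auto
  then have "vec.independent (?S \<union> B (Suc p))"
    using independent_Un_direct[OF IH(1)] B[OF t] by blast
  moreover have "vec.span (?S \<union> B (Suc p)) = K (Suc p)"
    unfolding vec.span_Un IH(2) B[OF t, THEN conjunct2] using U_sum[OF t] ssum_comm[of "K p"] by simp
  ultimately show ?case unfolding un by simp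
qed

lemma adapted_basis:
  assumes "\<And>t. t \<in> {1..m} \<Longrightarrow> F t \<subseteq> U t \<and> vec.independent (F t)"
  obtains B where "\<And>t. t \<in> {1..m} \<Longrightarrow> F t \<subseteq> B t \<and> B t \<subseteq> U t \<and> vec.span (B t) = U t"
    and "vec.independent (\<Union>t\<in>{1..m}. B t)" "vec.span (\<Union>t\<in>{1..m}. B t) = UNIV"
proof -
  have "\<forall>t\<in>{1..m}. \<exists>Bt. F t \<subseteq> Bt \<and> Bt \<subseteq> U t \<and> vec.independent Bt \<and> vec.span Bt = U t"
  proof
    fix t assume t: "t \<in> {1..m}"
    obtain Bt where Bt: "F t \<subseteq> Bt" "Bt \<subseteq> U t" "vec.independent Bt" "U t \<subseteq> vec.span Bt"
      using vec.maximal_independent_subset_extend[of "F t" "U t"] assms[OF t] by blast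
    then show "\<exists>Bt. F t \<subseteq> Bt \<and> Bt \<subseteq> U t \<and> vec.independent Bt \<and> vec.span Bt = U t"
      using vec.span_minimal[OF Bt(2) U_sub[OF t]] by blast
  qed
  then have "\<exists>B. \<forall>t\<in>{1..m}. F t \<subseteq> B t \<and> B t \<subseteq> U t \<and> vec.independent (B t) \<and> vec.span (B t) = U t"
    by (rule bchoice)
  then obtain B where B: "\<forall>t\<in>{1..m}. F t \<subseteq> B t \<and> B t \<subseteq> U t \<and> vec.independent (B t) \<and> vec.span (B t) = U t"
    by blast
  have "vec.independent (\<Union>t\<in>{1..m}. B t) \<and> vec.span (\<Union>t\<in>{1..m}. B t) = K m"
    using union_basis[of B m] B by blast
  then show ?thesis
    using that[of B] B kerpow_nilp_order[OF nil] by simp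
qed

text \<open>Every vector of U i is an eigenvector of s.  Otherwise u, s u are independent, and a
  transvection s u \<mapsto> s u + u adapted to the splitting stabilises every U t, hence commutes
  with s, which is absurd.\<close>
lemma s_eigenvector:
  assumes i: "i \<in> {1..m}" and u: "u \<in> U i"
  shows "\<exists>\<mu>. s *v u = \<mu> *s u"
proof (rule ccontr)
  assume no_eig: "\<nexists>\<mu>. s *v u = \<mu> *s u"
  define w where "w = s *v u"
  have wU: "w \<in> U i" unfolding w_def using s_U[OF i] u by blast
  have w_span: "w \<notin> vec.span {u}" using no_eig by (auto simp: w_def vec.span_singleton)
  have u0: "u \<noteq> 0"
  proof
    assume "u = 0" then have "s *v u = 0 *s u" by simp
    with no_eig show False by blast
  qed
  have w0: "w \<noteq> 0" and wu: "w \<noteq> u" using w_span vec.span_zero vec.span_base[of u "{u}"] by auto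
  define F where "F t = (if t = i then {w, u} else {})" for t
  have "vec.independent {w, u}" by (rule vec.independent_insertI[OF w_span independent_single[OF u0]])
  then have "F t \<subseteq> U t \<and> vec.independent (F t)" if "t \<in> {1..m}" for t
    using wU u by (simp add: F_def vec.independent_empty)
  then obtain B where B: "\<And>t. t \<in> {1..m} \<Longrightarrow> F t \<subseteq> B t \<and> B t \<subseteq> U t \<and> vec.span (B t) = U t"
      and BB: "vec.independent (\<Union>t\<in>{1..m}. B t)"
    by (rule adapted_basis) blast+
  have wB: "w \<in> B i" and uB: "u \<in> B i" using B[OF i] by (auto simp: F_def)
  obtain g where g: "invertible g" "g *v w = w + u"
      and g_fix: "\<And>b. b \<in> (\<Union>t\<in>{1..m}. B t) \<Longrightarrow> b \<noteq> w \<Longrightarrow> g *v b = b"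
    using transvection_exists[OF BB, of w u] wB uB i wu by blast
  have "(\<lambda>v. g *v v) ` U t = U t" if t: "t \<in> {1..m}" for t
  proof (rule invertible_image_eq[OF g(1) U_sub[OF t]])
    have "g *v b \<in> U t" if b: "b \<in> B t" for b
    proof (cases "b = w")
      case True
      then have "w \<in> U t" using b B[OF t] by blast
      then have "t = i" using U_disjoint[OF i t _ _ wU] w0 by blast
      then show ?thesis using True g(2) vec.subspace_add[OF U_sub[OF i] wU u] by simp
    next
      case False
      have "b \<in> (\<Union>t\<in>{1..m}. B t)" using b t by blast
      then have "g *v b = b" using g_fix False by blast
      then show ?thesis using b B[OF t] by auto
    qed
    then show "(\<lambda>v. g *v v) ` U t \<subseteq> U t"
      using matrix_image_span_subset[OF U_sub[OF t]] B[OF t] by metis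
  qed
  then have "g ** s = s ** g" using commute_iff_stabilises[OF g(1)] by blast
  then have "g *v (s *v u) = s *v (g *v u)" by (simp add: matrix_vector_mul_assoc)
  moreover have "g *v u = u" using g_fix[of u] uB i wu by blast
  ultimately have "w + u = w" using g(2) by (simp add: w_def)
  then show False using u0 by simp
qed

text \<open>The eigenvalues of s on distinct U t are distinct: otherwise the transvection w \<mapsto> w + u
  (u \<in> U t, w \<in> U p) commutes with s, yet does not stabilise U p.\<close>
lemma s_eigenvalues_distinct:
  assumes t: "t \<in> {1..m}" and p: "p \<in> {1..m}" and tp: "t \<noteq> p"
    and u: "u \<in> U t" "u \<noteq> 0" and w: "w \<in> U p" "w \<noteq> 0"
    and su: "s *v u = c *s u" and sw: "s *v w = c *s w"
  shows False
proof -
  have wu: "w \<noteq> u" using U_disjoint[OF p t tp u(1)] u(2) w(1) by blast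
  define F where "F r = (if r = t then {u} else if r = p then {w} else {})" for r
  have "F r \<subseteq> U r \<and> vec.independent (F r)" if "r \<in> {1..m}" for r
    using independent_single u w tp by (simp add: F_def vec.independent_empty)
  then obtain B where B: "\<And>r. r \<in> {1..m} \<Longrightarrow> F r \<subseteq> B r \<and> B r \<subseteq> U r \<and> vec.span (B r) = U r"
      and BB: "vec.independent (\<Union>r\<in>{1..m}. B r)" "vec.span (\<Union>r\<in>{1..m}. B r) = UNIV"
    by (rule adapted_basis) blast+
  have uB: "u \<in> (\<Union>r\<in>{1..m}. B r)" and wB: "w \<in> (\<Union>r\<in>{1..m}. B r)"
    using B[OF t] B[OF p] t p tp by (auto simp: F_def)
  obtain g where g: "invertible g" "g *v w = w + u"
      and g_fix: "\<And>b. b \<in> (\<Union>r\<in>{1..m}. B r) \<Longrightarrow> b \<noteq> w \<Longrightarrow> g *v b = b"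
    using transvection_exists[OF BB(1) wB uB wu] by blast
  have "g ** s = s ** g"
  proof (rule matrix_eq_on_spanning[OF BB(2)])
    fix b assume b: "b \<in> (\<Union>r\<in>{1..m}. B r)"
    show "(g ** s) *v b = (s ** g) *v b"
    proof (cases "b = w")
      case True
      then show ?thesis using sw su g(2)
        by (simp add: matrix_vector_mul_assoc[symmetric] vector_scalar_commute
            matrix_vector_right_distrib vec.scale_right_distrib)
    next
      case False
      obtain \<mu> where "s *v b = \<mu> *s b" using s_eigenvector b B by blast
      then show ?thesis using g_fix[OF b False]
        by (simp add: matrix_vector_mul_assoc[symmetric] vector_scalar_commute)
    qed
  qed
  then have "g *v w \<in> U p" using commute_iff_stabilises[OF g(1)] p w(1) by blast
  then have "w + u \<in> U p" using g(2) by simp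
  then have "(w + u) - w \<in> U p" by (rule vec.subspace_diff[OF U_sub[OF p] _ w(1)])
  then have "u \<in> U p" by simp
  then show False using U_disjoint[OF p t tp u(1)] u(2) by simp
qed

lemma eigenvector_in_K_zero:
  "p \<le> m \<Longrightarrow> v \<in> K p \<Longrightarrow> s *v v = c *s v \<Longrightarrow>
   (\<forall>t\<in>{1..p}. \<forall>w\<in>U t. s *v w = c *s w \<longrightarrow> w = 0) \<Longrightarrow> v = 0"
proof (induction p arbitrary: v)
  case 0
  then show ?case by (simp add: kerpow_0)
next
  case (Suc p)
  have t: "Suc p \<in> {1..m}" using Suc.prems(1) by simp
  have "v \<in> ssum (U (Suc p)) (K p)" using U_sum[OF t] Suc.prems(2) by simp
  then obtain a k where ak: "v = a + k" "a \<in> U (Suc p)" "k \<in> K p" by blast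
  obtain \<mu> where mu: "s *v a = \<mu> *s a" using s_eigenvector[OF t ak(2)] by blast
  have skK: "s *v k \<in> K p" using s_K ak(3) by blast
  have "\<mu> *s a + s *v k = c *s a + c *s k"
    using Suc.prems(3) ak(1) mu by (simp add: matrix_vector_right_distrib vec.scale_right_distrib)
  then have "(\<mu> - c) *s a = c *s k - s *v k"
    by (simp add: vec.scale_left_diff_distrib algebra_simps)
  moreover have "(\<mu> - c) *s a \<in> U (Suc p)" by (rule vec.subspace_scale[OF U_sub[OF t] ak(2)])
  moreover have "c *s k - s *v k \<in> K p"
    by (rule vec.subspace_diff[OF kerpow_subspace vec.subspace_scale[OF kerpow_subspace ak(3)] skK])
  ultimately have "(\<mu> - c) *s a \<in> U (Suc p) \<inter> K (Suc p - 1)" by simp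
  then have "(\<mu> - c) *s a = 0" using U_int[OF t] by blast
  then have a0: "a = 0"
  proof (rule contrapos_pp)
    assume "a \<noteq> 0"
    then have "s *v a \<noteq> c *s a" using Suc.prems(4) ak(2) by auto
    then show "(\<mu> - c) *s a \<noteq> 0" using mu by (simp add: vec.scale_left_diff_distrib)
  qed
  have "s *v k = c *s k" using Suc.prems(3) ak(1) a0 by simp
  moreover have "\<forall>t\<in>{1..p}. \<forall>w\<in>U t. s *v w = c *s w \<longrightarrow> w = 0" using Suc.prems(4) by auto
  ultimately have "k = 0" using Suc.IH[OF _ ak(3)] Suc.prems(1) by simp
  then show ?case using ak(1) a0 by simp
qed

lemma x_U1_zero: "u \<in> U 1 \<Longrightarrow> x *v u = 0"
proof -
  assume "u \<in> U 1"
  then have "u \<in> K 1" using U_K[of 1] m_pos by auto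
  then show ?thesis using kerpow_1_iff by blast
qed

lemma x_inj_U:
  assumes i: "i \<in> {2..m}" and u: "u \<in> U i" and xu: "x *v u = 0"
  shows "u = 0"
proof -
  have "u \<in> K 1" using xu kerpow_1_iff by blast
  moreover have "1 \<le> i - 1" using i by auto
  ultimately have "u \<in> K (i - 1)" using kerpow_mono by blast
  then show "u = 0" using U_int[of i] i u by auto
qed

text \<open>Write x u = w + k with w \<in> U (i-1), k \<in> K (i-2).
  Since s x = q x s and u is an eigenvector (eigenvalue mu), comparing components shows that
  w and k are eigenvectors for q mu; as w \<noteq> 0 this eigenvalue is that of U (i-1), so it does
  not occur on U 1, ..., U (i-2), forcing k = 0.\<close>
lemma x_maps_U:
  assumes i: "i \<in> {2..m}" and u: "u \<in> U i"
  shows "x *v u \<in> U (i - 1)"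
proof (cases "u = 0")
  case True
  moreover have "i - 1 \<in> {1..m}" using i by auto
  ultimately show ?thesis using U_0 by simp
next
  case False
  obtain j where j: "i = Suc (Suc j)" using i by (cases i; cases "i - 1") auto
  have ii: "i \<in> {1..m}" and tj: "Suc j \<in> {1..m}" using i j by auto
  obtain \<mu> where mu: "s *v u = \<mu> *s u" using s_eigenvector[OF ii u] by blast
  have "x *v u \<in> K (Suc j)" using U_K[OF ii] u j kerpow_Suc_iff by blast
  then have "x *v u \<in> ssum (U (Suc j)) (K j)" using U_sum[OF tj] by simp
  then obtain w k where wk: "x *v u = w + k" "w \<in> U (Suc j)" "k \<in> K j" by blast
  obtain \<nu> where nu: "s *v w = \<nu> *s w" using s_eigenvector[OF tj wk(2)] by blast
  have skK: "s *v k \<in> K j" using s_K wk(3) by blast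
  have "s *v (x *v u) = (q * \<mu>) *s (x *v u)"
    using s_x[of u] mu by (simp add: vector_scalar_commute)
  then have "\<nu> *s w + s *v k = (q * \<mu>) *s w + (q * \<mu>) *s k"
    using wk(1) nu by (simp add: matrix_vector_right_distrib vec.scale_right_distrib)
  then have eq: "((q * \<mu>) - \<nu>) *s w = s *v k - (q * \<mu>) *s k"
    by (simp add: vec.scale_left_diff_distrib algebra_simps)
  moreover have "((q * \<mu>) - \<nu>) *s w \<in> U (Suc j)" by (rule vec.subspace_scale[OF U_sub[OF tj] wk(2)])
  moreover have "s *v k - (q * \<mu>) *s k \<in> K j"
    by (rule vec.subspace_diff[OF kerpow_subspace skK vec.subspace_scale[OF kerpow_subspace wk(3)]])
  ultimately have "((q * \<mu>) - \<nu>) *s w \<in> U (Suc j) \<inter> K (Suc j - 1)" by simp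
  then have z: "((q * \<mu>) - \<nu>) *s w = 0" using U_int[OF tj] by blast
  have sk: "s *v k = (q * \<mu>) *s k" using eq unfolding z by simp
  have w0: "w \<noteq> 0"
  proof
    assume "w = 0"
    then have "x *v u \<in> K j" using wk by simp
    then have "u \<in> K (i - 1)" using j by (simp add: kerpow_Suc_iff)
    then show False using U_int[OF ii] u False by blast
  qed
  then have "q * \<mu> = \<nu>" using z by simp
  then have "k = 0"
    using eigenvector_in_K_zero[OF _ wk(3) sk] s_eigenvalues_distinct[OF _ tj _ _ _ wk(2) w0 _ nu] tj
    by force
  then show ?thesis using wk j by simp
qed

text \<open>s acts on U i by scalars, so it stabilises every subspace of U i.\<close>
lemma s_stabilises_sub_U:
  assumes i: "i \<in> {1..m}" and W: "vec.subspace W" "W \<subseteq> U i"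
  shows "(\<lambda>v. s *v v) ` W = W"
proof (rule invertible_image_eq[OF s_inv W(1)])
  show "(\<lambda>v. s *v v) ` W \<subseteq> W"
    using s_eigenvector[OF i] W vec.subspace_scale[OF W(1)] by fastforce
qed

end

lemma descending_choice:
  fixes Q :: "nat \<Rightarrow> 'b \<Rightarrow> bool" and R :: "nat \<Rightarrow> 'b \<Rightarrow> 'b \<Rightarrow> bool"
  assumes top: "1 \<le> n \<Longrightarrow> \<exists>z. Q n z"
    and step: "\<And>j z. 1 \<le> j \<Longrightarrow> j < n \<Longrightarrow> Q (Suc j) z \<Longrightarrow> \<exists>z'. Q j z' \<and> R j z' z"
  shows "\<exists>Z. (\<forall>j\<in>{1..n}. Q j (Z j)) \<and> (\<forall>j. 1 \<le> j \<longrightarrow> j < n \<longrightarrow> R j (Z j) (Z (Suc j)))"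
proof -
  define good where "good Z j \<longleftrightarrow> Q j (Z j) \<and> (j < n \<longrightarrow> R j (Z j) (Z (Suc j)))" for Z j
  have "\<exists>Z. \<forall>j. n - r < j \<longrightarrow> j \<le> n \<longrightarrow> good Z j" if "r \<le> n" for r
    using that
  proof (induction r)
    case 0
    then show ?case by auto
  next
    case (Suc r)
    then obtain Z where Z: "\<forall>j. n - r < j \<longrightarrow> j \<le> n \<longrightarrow> good Z j" by auto
    define j0 where "j0 = n - r"
    have j0: "1 \<le> j0" "j0 \<le> n" using Suc.prems j0_def by auto
    obtain z where z: "Q j0 z" "j0 < n \<longrightarrow> R j0 z (Z (Suc j0))"
    proof (cases "j0 < n")
      case True
      then have "Q (Suc j0) (Z (Suc j0))" using Z j0_def unfolding good_def by auto
      then show ?thesis using step[OF j0(1) True] that by blast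
    next
      case False
      then show ?thesis using top j0 that by auto
    qed
    have "good (Z(j0 := z)) j" if "n - Suc r < j" "j \<le> n" for j
    proof (cases "j = j0")
      case True
      then show ?thesis using z by (simp add: good_def)
    next
      case False
      then have "n - r < j" using that j0_def by auto
      then show ?thesis using Z that False j0_def by (auto simp: good_def)
    qed
    then show ?case by blast
  qed
  from this[of n] obtain Z where "\<forall>j. 0 < j \<longrightarrow> j \<le> n \<longrightarrow> good Z j" by auto
  then show ?thesis unfolding good_def by (intro exI[of _ Z]) auto
qed

lemma nested_subspaces_between:
  fixes Y :: "nat \<Rightarrow> ('a::field^'d) set" and T :: "('a^'d) set" and c :: "nat \<Rightarrow> nat"
  assumes T: "vec.subspace T"
    and Y: "\<And>j. j \<in> {1..n} \<Longrightarrow>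
              vec.subspace (Y j) \<and> Y j \<subseteq> T \<and> vec.dim (Y j) \<le> c j \<and> c j \<le> vec.dim T"
    and Y_mono: "\<And>j. 1 \<le> j \<Longrightarrow> j < n \<Longrightarrow> Y j \<subseteq> Y (Suc j) \<and> c j \<le> c (Suc j)"
  shows "\<exists>Z. (\<forall>j\<in>{1..n}. vec.subspace (Z j) \<and> Y j \<subseteq> Z j \<and> Z j \<subseteq> T \<and> vec.dim (Z j) = c j)
           \<and> (\<forall>j. 1 \<le> j \<longrightarrow> j < n \<longrightarrow> Z j \<subseteq> Z (Suc j))"
proof (rule descending_choice[where Q = "\<lambda>j z. vec.subspace z \<and> Y j \<subseteq> z \<and> z \<subseteq> T \<and> vec.dim z = c j"
      and R = "\<lambda>j z z'. z \<subseteq> z'"])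
  assume "1 \<le> n"
  then have "vec.subspace (Y n)" "Y n \<subseteq> T" "vec.dim (Y n) \<le> c n" "c n \<le> vec.dim T" using Y by auto
  then obtain W where "vec.subspace W" "Y n \<subseteq> W" "W \<subseteq> T" "vec.dim W = c n"
    by (rule subspace_between[OF _ T])
  then show "\<exists>z. vec.subspace z \<and> Y n \<subseteq> z \<and> z \<subseteq> T \<and> vec.dim z = c n" by blast
next
  fix j z assume j: "1 \<le> j" "j < n"
    and z: "vec.subspace z \<and> Y (Suc j) \<subseteq> z \<and> z \<subseteq> T \<and> vec.dim z = c (Suc j)"
  have "vec.subspace (Y j)" "Y j \<subseteq> z" "vec.dim (Y j) \<le> c j" "c j \<le> vec.dim z"
    using Y[of j] Y_mono[OF j] z j by auto
  then obtain W where "vec.subspace W" "Y j \<subseteq> W" "W \<subseteq> z" "vec.dim W = c j"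
    using subspace_between[of "Y j" z "c j"] z by blast
  then show "\<exists>z'. (vec.subspace z' \<and> Y j \<subseteq> z' \<and> z' \<subseteq> T \<and> vec.dim z' = c j) \<and> z' \<subseteq> z"
    using z by blast
qed

fun sum_upto :: "(nat \<Rightarrow> ('a::field^'d) set) \<Rightarrow> nat \<Rightarrow> ('a^'d) set" where
  "sum_upto W 0 = {0}"
| "sum_upto W (Suc i) = ssum (sum_upto W i) (W (Suc i))"

lemma sum_upto_mono: "(\<forall>t\<in>{1..i}. W t \<subseteq> W' t) \<Longrightarrow> sum_upto W i \<subseteq> sum_upto W' i"
proof (induction i)
  case (Suc i)
  then have "sum_upto W i \<subseteq> sum_upto W' i" "W (Suc i) \<subseteq> W' (Suc i)" by auto
  then show ?case by auto
qed simp

lemma sum_upto_subspace: "(\<forall>t\<in>{1..i}. vec.subspace (W t)) \<Longrightarrow> vec.subspace (sum_upto W i)"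
  by (induction i) (auto intro: vec.subspace_sums)

lemma sum_upto_Suc_sup: "0 \<in> W (Suc i) \<Longrightarrow> sum_upto W i \<subseteq> sum_upto W (Suc i)"
  by force

lemma sum_upto_summand: "0 \<in> sum_upto W i \<Longrightarrow> W (Suc i) \<subseteq> sum_upto W (Suc i)"
  by force

context levi_splitting begin

lemma x_image_U:
  assumes i: "i \<in> {2..m}" and W: "vec.subspace W" "W \<subseteq> U i"
  shows "vec.subspace ((\<lambda>v. x *v v) ` W) \<and> (\<lambda>v. x *v v) ` W \<subseteq> U (i - 1)
         \<and> vec.dim ((\<lambda>v. x *v v) ` W) = vec.dim W"
proof (intro conjI)
  show "vec.subspace ((\<lambda>v. x *v v) ` W)" using vec.subspace_image[OF W(1), of x] by simp
  show "(\<lambda>v. x *v v) ` W \<subseteq> U (i - 1)" using x_maps_U[OF i] W(2) by blast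
  have "inj_on ((*v) x) (vec.span W)"
  proof (rule vec.linear_inj_on_iff_eq_0[OF matrix_vector_mul_linear_gen, THEN iffD2])
    show "\<forall>a\<in>vec.span W. x *v a = 0 \<longrightarrow> a = 0"
    proof (intro ballI impI)
      fix a assume a: "a \<in> vec.span W" "x *v a = 0"
      then have "a \<in> U i" using W vec.span_eq_iff[of W] by blast
      then show "a = 0" using x_inj_U[OF i] a(2) by blast
    qed
  qed simp
  then show "vec.dim ((\<lambda>v. x *v v) ` W) = vec.dim W"
    using vec.dim_image_eq[OF matrix_vector_mul_linear_gen] by simp
qed

text \<open>They are
  chosen row by row from i = m downwards, each row enlarging the image of the previous one.\<close>
lemma graded_rows_exist:
  fixes a :: "nat \<Rightarrow> nat \<Rightarrow> nat"
  assumes a_le: "\<And>i j. i \<in> {1..m} \<Longrightarrow> j \<in> {1..n} \<Longrightarrow> a i j \<le> vec.dim (U i)"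
    and a_Suc_i: "\<And>i j. 1 \<le> i \<Longrightarrow> i < m \<Longrightarrow> j \<in> {1..n} \<Longrightarrow> a (Suc i) j \<le> a i j"
    and a_Suc_j: "\<And>i j. i \<in> {1..m} \<Longrightarrow> 1 \<le> j \<Longrightarrow> j < n \<Longrightarrow> a i j \<le> a i (Suc j)"
  shows "\<exists>W. (\<forall>i\<in>{1..m}. (\<forall>j\<in>{1..n}. vec.subspace (W i j) \<and> W i j \<subseteq> U i \<and> vec.dim (W i j) = a i j)
                       \<and> (\<forall>j. 1 \<le> j \<longrightarrow> j < n \<longrightarrow> W i j \<subseteq> W i (Suc j)))
          \<and> (\<forall>i. 1 \<le> i \<longrightarrow> i < m \<longrightarrow> (\<forall>j\<in>{1..n}. (\<lambda>v. x *v v) ` W (Suc i) j \<subseteq> W i j))"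
proof (rule descending_choice[where
      Q = "\<lambda>i Wi. (\<forall>j\<in>{1..n}. vec.subspace (Wi j) \<and> Wi j \<subseteq> U i \<and> vec.dim (Wi j) = a i j)
                  \<and> (\<forall>j. 1 \<le> j \<longrightarrow> j < n \<longrightarrow> Wi j \<subseteq> Wi (Suc j))"
      and R = "\<lambda>i Wi Wi'. \<forall>j\<in>{1..n}. (\<lambda>v. x *v v) ` Wi' j \<subseteq> Wi j"])
  assume "1 \<le> m"
  then have m: "m \<in> {1..m}" by simp
  show "\<exists>Wi. (\<forall>j\<in>{1..n}. vec.subspace (Wi j) \<and> Wi j \<subseteq> U m \<and> vec.dim (Wi j) = a m j)
              \<and> (\<forall>j. 1 \<le> j \<longrightarrow> j < n \<longrightarrow> Wi j \<subseteq> Wi (Suc j))"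
  proof -
    have "\<exists>Z. (\<forall>j\<in>{1..n}. vec.subspace (Z j) \<and> {0} \<subseteq> Z j \<and> Z j \<subseteq> U m \<and> vec.dim (Z j) = a m j)
              \<and> (\<forall>j. 1 \<le> j \<longrightarrow> j < n \<longrightarrow> Z j \<subseteq> Z (Suc j))"
      by (rule nested_subspaces_between[OF U_sub[OF m]]) (use a_le[OF m] a_Suc_j[OF m] U_0[OF m] in auto)
    then show ?thesis by blast
  qed
next
  fix i Wi' assume i: "1 \<le> i" "i < m"
    and Wi': "(\<forall>j\<in>{1..n}. vec.subspace (Wi' j) \<and> Wi' j \<subseteq> U (Suc i) \<and> vec.dim (Wi' j) = a (Suc i) j)
              \<and> (\<forall>j. 1 \<le> j \<longrightarrow> j < n \<longrightarrow> Wi' j \<subseteq> Wi' (Suc j))"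
  have im: "i \<in> {1..m}" and si: "Suc i \<in> {2..m}" using i by auto
  let ?Y = "\<lambda>j. (\<lambda>v. x *v v) ` Wi' j"
  have Y: "vec.subspace (?Y j) \<and> ?Y j \<subseteq> U i \<and> vec.dim (?Y j) \<le> a i j \<and> a i j \<le> vec.dim (U i)"
    if j: "j \<in> {1..n}" for j
  proof -
    have "vec.subspace (Wi' j)" "Wi' j \<subseteq> U (Suc i)" "vec.dim (Wi' j) = a (Suc i) j" using Wi' j by auto
    then have "vec.subspace (?Y j) \<and> ?Y j \<subseteq> U i \<and> vec.dim (?Y j) = a (Suc i) j"
      using x_image_U[OF si] by simp
    then show ?thesis using a_Suc_i[OF i j] a_le[OF im j] by simp
  qed
  have Y_mono: "?Y j \<subseteq> ?Y (Suc j) \<and> a i j \<le> a i (Suc j)" if "1 \<le> j" "j < n" for j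
    using Wi' that a_Suc_j[OF im that] by (simp add: image_mono)
  obtain Z where Z: "\<forall>j\<in>{1..n}. vec.subspace (Z j) \<and> ?Y j \<subseteq> Z j \<and> Z j \<subseteq> U i \<and> vec.dim (Z j) = a i j"
      "\<forall>j. 1 \<le> j \<longrightarrow> j < n \<longrightarrow> Z j \<subseteq> Z (Suc j)"
    using nested_subspaces_between[OF U_sub[OF im], of n ?Y "a i", OF Y Y_mono] by blast
  show "\<exists>Wi. ((\<forall>j\<in>{1..n}. vec.subspace (Wi j) \<and> Wi j \<subseteq> U i \<and> vec.dim (Wi j) = a i j)
              \<and> (\<forall>j. 1 \<le> j \<longrightarrow> j < n \<longrightarrow> Wi j \<subseteq> Wi (Suc j)))
          \<and> (\<forall>j\<in>{1..n}. (\<lambda>v. x *v v) ` Wi' j \<subseteq> Wi j)"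
    using Z by (intro exI[of _ Z]) blast
qed

context
  fixes W :: "nat \<Rightarrow> ('a^'d) set"
  assumes W_sub: "\<And>t. t \<in> {1..m} \<Longrightarrow> vec.subspace (W t) \<and> W t \<subseteq> U t"
    and W_x: "\<And>t. t \<in> {2..m} \<Longrightarrow> (\<lambda>v. x *v v) ` W t \<subseteq> W (t - 1)"
begin

lemma column_subspace: "i \<le> m \<Longrightarrow> vec.subspace (sum_upto W i)"
  using sum_upto_subspace[of i W] W_sub by auto

lemma column_0: "i \<le> m \<Longrightarrow> 0 \<in> sum_upto W i"
  using column_subspace vec.subspace_0 by blast

lemma column_Suc_sup: "Suc i \<le> m \<Longrightarrow> sum_upto W i \<subseteq> sum_upto W (Suc i)"
  using sum_upto_Suc_sup[of W i] W_sub[of "Suc i"] vec.subspace_0 by auto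

lemma column_K: "i \<le> m \<Longrightarrow> sum_upto W i \<subseteq> K i"
proof (induction i)
  case 0
  then show ?case by (simp add: kerpow_0)
next
  case (Suc i)
  have t: "Suc i \<in> {1..m}" using Suc.prems by simp
  have "sum_upto W i \<subseteq> K (Suc i)" using Suc kerpow_mono[of i "Suc i" x] by force
  moreover have "W (Suc i) \<subseteq> K (Suc i)" using W_sub[OF t] U_K[OF t] by blast
  ultimately show ?case using vec.subspace_add[OF kerpow_subspace] by force
qed

lemma column_dim_Suc:
  assumes "Suc i \<le> m"
  shows "vec.dim (sum_upto W (Suc i)) = vec.dim (sum_upto W i) + vec.dim (W (Suc i))"
proof -
  have t: "Suc i \<in> {1..m}" using assms by simp
  have "sum_upto W i \<inter> W (Suc i) \<subseteq> K i \<inter> U (Suc i)" using column_K[of i] assms W_sub[OF t] by auto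
  also have "\<dots> \<subseteq> {0}" using U_int[OF t] by auto
  finally show ?thesis using dim_direct_sum[OF column_subspace[of i]] W_sub[OF t] assms by simp
qed

lemma column_Int_K_Suc:
  assumes "Suc p \<le> m" "i \<le> p"
  shows "sum_upto W (Suc p) \<inter> K i = sum_upto W p \<inter> K i"
proof
  have t: "Suc p \<in> {1..m}" using assms by simp
  show "sum_upto W (Suc p) \<inter> K i \<subseteq> sum_upto W p \<inter> K i"
  proof
    fix z assume z: "z \<in> sum_upto W (Suc p) \<inter> K i"
    then obtain a b where ab: "z = a + b" "a \<in> sum_upto W p" "b \<in> W (Suc p)" by auto
    have "a \<in> K p" using column_K[of p] assms ab(2) by auto
    moreover have "z \<in> K p" using z kerpow_mono[OF assms(2)] by blast
    ultimately have "z - a \<in> K p" using vec.subspace_diff[OF kerpow_subspace] by blast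
    moreover have "b \<in> U (Suc p)" using W_sub[OF t] ab(3) by blast
    ultimately have "b = 0" using U_int[OF t] ab(1) by auto
    then show "z \<in> sum_upto W p \<inter> K i" using ab z by simp
  qed
  show "sum_upto W p \<inter> K i \<subseteq> sum_upto W (Suc p) \<inter> K i"
    using column_Suc_sup[OF assms(1)] by blast
qed

lemma column_Int_K: "i \<le> p \<Longrightarrow> p \<le> m \<Longrightarrow> sum_upto W p \<inter> K i = sum_upto W i"
proof (induction p rule: dec_induct)
  case base
  then show ?case using column_K[of i] by auto
next
  case (step p)
  then show ?case using column_Int_K_Suc[of p i] by simp
qed

lemma column_x_stable: "i \<le> m \<Longrightarrow> (\<lambda>v. x *v v) ` sum_upto W i \<subseteq> sum_upto W i"
proof (induction i)
  case 0
  then show ?case by simp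
next
  case (Suc i)
  have t: "Suc i \<in> {1..m}" using Suc.prems by simp
  have sup: "sum_upto W i \<subseteq> sum_upto W (Suc i)" by (rule column_Suc_sup[OF Suc.prems])
  show ?case
  proof
    fix z assume "z \<in> (\<lambda>v. x *v v) ` sum_upto W (Suc i)"
    then obtain a b where ab: "z = x *v (a + b)" "a \<in> sum_upto W i" "b \<in> W (Suc i)" by auto
    have xa: "x *v a \<in> sum_upto W (Suc i)" using Suc ab(2) sup by auto
    have xb: "x *v b \<in> sum_upto W (Suc i)"
    proof (cases i)
      case 0
      then have "x *v b = 0" using W_sub[OF t] ab(3) x_U1_zero by auto
      then show ?thesis using column_0[OF Suc.prems] by simp
    next
      case (Suc i')
      then have "x *v b \<in> W i" using W_x[of "Suc i"] ab(3) t by fastforce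
      moreover have "W i \<subseteq> sum_upto W i"
        using sum_upto_summand[of W i'] column_0[of i'] Suc Suc.prems by simp
      ultimately show ?thesis using sup by blast
    qed
    show "z \<in> sum_upto W (Suc i)"
      using ab(1) xa xb vec.subspace_add[OF column_subspace[OF Suc.prems]]
      by (simp add: matrix_vector_right_distrib)
  qed
qed

lemma column_s_fixed: "i \<le> m \<Longrightarrow> (\<lambda>v. s *v v) ` sum_upto W i = sum_upto W i"
proof -
  have "(\<lambda>v. s *v v) ` sum_upto W i \<subseteq> sum_upto W i" if "i \<le> m" for i
    using that
  proof (induction i)
    case (Suc i)
    have t: "Suc i \<in> {1..m}" using Suc.prems by simp
    have "(\<lambda>v. s *v v) ` W (Suc i) = W (Suc i)" using s_stabilises_sub_U[OF t] W_sub[OF t] by blast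
    then show ?case using Suc by (force simp: matrix_vector_right_distrib)
  qed simp
  then show "i \<le> m \<Longrightarrow> ?thesis" using invertible_image_eq[OF s_inv column_subspace] by blast
qed

lemma column_dim:
  assumes "\<And>t. t \<in> {1..m} \<Longrightarrow> int (vec.dim (W t)) = \<alpha> t j - (if t = 1 then 0 else \<alpha> (t - 1) j)"
  shows "i \<in> {1..m} \<Longrightarrow> int (vec.dim (sum_upto W i)) = \<alpha> i j"
proof (induction i)
  case (Suc i)
  then show ?case
    using column_dim_Suc[of i] assms[of "Suc i"] by (cases "i = 0") auto
qed simp

end

end

definition alpha_jump :: "(nat \<Rightarrow> nat \<Rightarrow> int) \<Rightarrow> nat \<Rightarrow> nat \<Rightarrow> int" where
  "alpha_jump \<alpha> i j = \<alpha> i j - (if i = 1 then 0 else \<alpha> (i - 1) j)"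

context levi_splitting begin

lemma admissible_jumps:
  assumes adm: "admissible m n k x \<alpha>" and i: "i \<in> {1..m}" and j: "j \<in> {1..n}"
  shows "0 \<le> alpha_jump \<alpha> i j"
    and "alpha_jump \<alpha> i j \<le> int (vec.dim (U i))"
    and "i < m \<Longrightarrow> alpha_jump \<alpha> (Suc i) j \<le> alpha_jump \<alpha> i j"
    and "j < n \<Longrightarrow> alpha_jump \<alpha> i j \<le> alpha_jump \<alpha> i (Suc j)"
proof -
  note c = adm[unfolded admissible_def]
  have mono: "\<And>i i' j j'. 1 \<le> i \<Longrightarrow> i \<le> i' \<Longrightarrow> i' \<le> m \<Longrightarrow> 1 \<le> j \<Longrightarrow> j \<le> j' \<Longrightarrow> j' \<le> n \<Longrightarrow>
      0 \<le> \<alpha> i j \<and> \<alpha> i j \<le> \<alpha> i' j'"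
    using c by blast
  have jumps: "\<And>i i' j j'. 2 \<le> i \<Longrightarrow> i \<le> i' \<Longrightarrow> i' \<le> m \<Longrightarrow> 1 \<le> j' \<Longrightarrow> j' \<le> j \<Longrightarrow> j \<le> n \<Longrightarrow>
      \<alpha> i' j' - \<alpha> (i' - 1) j' \<le> \<alpha> i j - \<alpha> (i - 1) j \<and> \<alpha> i j - \<alpha> (i - 1) j \<le> \<alpha> 1 j"
    using c by blast
  show "0 \<le> alpha_jump \<alpha> i j"
    using mono[of i i j j] mono[of "i - 1" i j j] i j by (auto simp: alpha_jump_def)
  have dU: "int (vec.dim (U i)) = int (vec.dim (K i)) - int (vec.dim (K (i - 1)))"
    using dim_U[OF i] by simp
  show "alpha_jump \<alpha> i j \<le> int (vec.dim (U i))"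
    using c i j dU by (cases "i = 1") (auto simp: alpha_jump_def kerpow_0)
  show "alpha_jump \<alpha> (Suc i) j \<le> alpha_jump \<alpha> i j" if "i < m"
    using jumps[of 2 2 j j] jumps[of i "Suc i" j j] that i j
    by (cases "i = 1") (auto simp: alpha_jump_def numeral_2_eq_2)
  show "alpha_jump \<alpha> i j \<le> alpha_jump \<alpha> i (Suc j)" if "j < n"
    using mono[of 1 1 j "Suc j"] jumps[of i i j "Suc j"] that i j
    by (cases "i = 1") (auto simp: alpha_jump_def)
qed

lemma flag_of_rows:
  fixes W :: "nat \<Rightarrow> nat \<Rightarrow> ('a^'d) set"
  assumes W_sub: "\<And>i j. i \<in> {1..m} \<Longrightarrow> j \<in> {1..n} \<Longrightarrow> vec.subspace (W i j) \<and> W i j \<subseteq> U i"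
    and W_dim: "\<And>i j. i \<in> {1..m} \<Longrightarrow> j \<in> {1..n} \<Longrightarrow> int (vec.dim (W i j)) = alpha_jump \<alpha> i j"
    and W_nested: "\<And>i j. i \<in> {1..m} \<Longrightarrow> 1 \<le> j \<Longrightarrow> j < n \<Longrightarrow> W i j \<subseteq> W i (Suc j)"
    and W_x: "\<And>i j. i \<in> {2..m} \<Longrightarrow> j \<in> {1..n} \<Longrightarrow> (\<lambda>v. x *v v) ` W i j \<subseteq> W (i - 1) j"
    and alpha_m: "\<And>j. j \<in> {1..n} \<Longrightarrow> \<alpha> m j = int (k j)"
  defines "V \<equiv> \<lambda>j. if j \<in> {1..n} then sum_upto (\<lambda>i. W i j) m else {0}"
  shows "V \<in> fixed_flags s (stable_flags n k x) \<inter> P_alpha n k x m \<alpha>"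
proof -
  have col_sub: "vec.subspace (W t j) \<and> W t j \<subseteq> U t" if "j \<in> {1..n}" "t \<in> {1..m}" for j t
    using W_sub that by blast
  have col_x: "(\<lambda>v. x *v v) ` W t j \<subseteq> W (t - 1) j" if "j \<in> {1..n}" "t \<in> {2..m}" for j t
    using W_x that by blast
  have col_dim: "int (vec.dim (sum_upto (\<lambda>i. W i j) i)) = \<alpha> i j" if j: "j \<in> {1..n}" and i: "i \<in> {1..m}"
    for i j
  proof -
    have jumps: "int (vec.dim (W t j)) = \<alpha> t j - (if t = 1 then 0 else \<alpha> (t - 1) j)"
      if "t \<in> {1..m}" for t
      using W_dim[OF that j] by (simp add: alpha_jump_def)
    show ?thesis using column_dim[where W = "\<lambda>t. W t j" and \<alpha> = \<alpha> and j = j, OF col_sub[OF j] col_x[OF j] jumps i] by simp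
  qed
  have m: "m \<in> {1..m}" using m_pos by simp
  have VF: "V \<in> flag_variety n k"
    unfolding flag_variety_def
  proof (intro CollectI conjI ballI allI impI)
    fix j assume j: "j \<in> {1..n}"
    show "vec.subspace (V j)" using column_subspace[where W = "\<lambda>t. W t j", OF col_sub[OF j] col_x[OF j], of m] by (simp add: V_def)
    show "vec.dim (V j) = k j" using col_dim[OF j m] alpha_m[OF j] j by (simp add: V_def)
  next
    fix j assume j: "1 \<le> j \<and> j < n"
    then have "sum_upto (\<lambda>i. W i j) m \<subseteq> sum_upto (\<lambda>i. W i (Suc j)) m"
      using W_nested by (intro sum_upto_mono) auto
    then show "V j \<subseteq> V (Suc j)" using j by (simp add: V_def)
  next
    fix j assume "j \<notin> {1..n}"
    then show "V j = {0}" unfolding V_def by (simp only: if_False)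
  qed
  have "V \<in> stable_flags n k x"
    unfolding stable_flags_def
  proof (intro CollectI conjI ballI VF)
    fix j assume j: "j \<in> {1..n}"
    show "(\<lambda>v. x *v v) ` V j \<subseteq> V j"
      using column_x_stable[where W = "\<lambda>t. W t j", OF col_sub[OF j] col_x[OF j], of m] j
      by (simp add: V_def)
  qed
  moreover have "(\<lambda>v. s *v v) ` V j = V j" for j
  proof (cases "j \<in> {1..n}")
    case True
    then show ?thesis
      using column_s_fixed[where W = "\<lambda>t. W t j", OF col_sub[OF True] col_x[OF True], of m]
      by (simp add: V_def)
  next
    case False
    then have "V j = {0}" unfolding V_def by (simp only: if_False)
    then show ?thesis by simp
  qed
  moreover have "int (vec.dim (V j \<inter> K i)) = \<alpha> i j" if i: "i \<in> {1..m}" and j: "j \<in> {1..n}" for i j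
    using column_Int_K[where W = "\<lambda>t. W t j", OF col_sub[OF j] col_x[OF j], of i m] col_dim[OF j i] i j
    by (simp add: V_def)
  ultimately show ?thesis using VF by (simp add: fixed_flags_def P_alpha_def)
qed

lemma admissible_rows_exist:
  assumes adm: "admissible m n k x \<alpha>"
  obtains W where "\<And>i j. i \<in> {1..m} \<Longrightarrow> j \<in> {1..n} \<Longrightarrow> vec.subspace (W i j) \<and> W i j \<subseteq> U i"
    and "\<And>i j. i \<in> {1..m} \<Longrightarrow> j \<in> {1..n} \<Longrightarrow> int (vec.dim (W i j)) = alpha_jump \<alpha> i j"
    and "\<And>i j. i \<in> {1..m} \<Longrightarrow> 1 \<le> j \<Longrightarrow> j < n \<Longrightarrow> W i j \<subseteq> W i (Suc j)"
    and "\<And>i j. i \<in> {2..m} \<Longrightarrow> j \<in> {1..n} \<Longrightarrow> (\<lambda>v. x *v v) ` W i j \<subseteq> W (i - 1) j"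
proof -
  define a where "a i j = nat (alpha_jump \<alpha> i j)" for i j
  have a_jump: "int (a i j) = alpha_jump \<alpha> i j" if "i \<in> {1..m}" "j \<in> {1..n}" for i j
    using admissible_jumps(1)[OF adm that] by (simp add: a_def)
  have "\<exists>W. (\<forall>i\<in>{1..m}. (\<forall>j\<in>{1..n}. vec.subspace (W i j) \<and> W i j \<subseteq> U i \<and> vec.dim (W i j) = a i j)
                     \<and> (\<forall>j. 1 \<le> j \<longrightarrow> j < n \<longrightarrow> W i j \<subseteq> W i (Suc j)))
        \<and> (\<forall>i. 1 \<le> i \<longrightarrow> i < m \<longrightarrow> (\<forall>j\<in>{1..n}. (\<lambda>v. x *v v) ` W (Suc i) j \<subseteq> W i j))"
  proof (rule graded_rows_exist)
    show "a i j \<le> vec.dim (U i)" if "i \<in> {1..m}" "j \<in> {1..n}" for i j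
      using admissible_jumps(2)[OF adm that] a_jump[OF that] by simp
    show "a (Suc i) j \<le> a i j" if "1 \<le> i" "i < m" "j \<in> {1..n}" for i j
    proof -
      have i: "i \<in> {1..m}" "Suc i \<in> {1..m}" using that by auto
      have "int (a (Suc i) j) \<le> int (a i j)"
        using admissible_jumps(3)[OF adm i(1) that(3) that(2)] a_jump[OF i(1) that(3)]
          a_jump[OF i(2) that(3)] by simp
      then show ?thesis by simp
    qed
    show "a i j \<le> a i (Suc j)" if "i \<in> {1..m}" "1 \<le> j" "j < n" for i j
    proof -
      have j: "j \<in> {1..n}" "Suc j \<in> {1..n}" using that by auto
      have "int (a i j) \<le> int (a i (Suc j))"
        using admissible_jumps(4)[OF adm that(1) j(1) that(3)] a_jump[OF that(1) j(1)]
          a_jump[OF that(1) j(2)] by simp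
      then show ?thesis by simp
    qed
  qed
  then obtain W where rows: "\<forall>i\<in>{1..m}. (\<forall>j\<in>{1..n}. vec.subspace (W i j) \<and> W i j \<subseteq> U i \<and> vec.dim (W i j) = a i j)
                       \<and> (\<forall>j. 1 \<le> j \<longrightarrow> j < n \<longrightarrow> W i j \<subseteq> W i (Suc j))"
      and rows_x: "\<forall>i. 1 \<le> i \<longrightarrow> i < m \<longrightarrow> (\<forall>j\<in>{1..n}. (\<lambda>v. x *v v) ` W (Suc i) j \<subseteq> W i j)"
    by blast
  show ?thesis
  proof (rule that)
    show "vec.subspace (W i j) \<and> W i j \<subseteq> U i" "int (vec.dim (W i j)) = alpha_jump \<alpha> i j"
      if "i \<in> {1..m}" "j \<in> {1..n}" for i j
      using rows a_jump[OF that] that by auto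
    show "W i j \<subseteq> W i (Suc j)" if "i \<in> {1..m}" "1 \<le> j" "j < n" for i j
      using rows that by auto
    show "(\<lambda>v. x *v v) ` W i j \<subseteq> W (i - 1) j" if "i \<in> {2..m}" "j \<in> {1..n}" for i j
    proof -
      have "1 \<le> i - 1" "i - 1 < m" "Suc (i - 1) = i" using that by auto
      then show ?thesis using rows_x[rule_format, of "i - 1" j] that(2) by simp
    qed
  qed
qed

lemma admissible_realised:
  assumes adm: "admissible m n k x \<alpha>"
  shows "fixed_flags s (stable_flags n k x) \<inter> P_alpha n k x m \<alpha> \<noteq> {}"
proof -
  obtain W where W_sub: "\<And>i j. i \<in> {1..m} \<Longrightarrow> j \<in> {1..n} \<Longrightarrow> vec.subspace (W i j) \<and> W i j \<subseteq> U i"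
    and W_dim: "\<And>i j. i \<in> {1..m} \<Longrightarrow> j \<in> {1..n} \<Longrightarrow> int (vec.dim (W i j)) = alpha_jump \<alpha> i j"
    and W_nested: "\<And>i j. i \<in> {1..m} \<Longrightarrow> 1 \<le> j \<Longrightarrow> j < n \<Longrightarrow> W i j \<subseteq> W i (Suc j)"
    and W_x: "\<And>i j. i \<in> {2..m} \<Longrightarrow> j \<in> {1..n} \<Longrightarrow> (\<lambda>v. x *v v) ` W i j \<subseteq> W (i - 1) j"
    by (rule admissible_rows_exist[OF adm]) blast
  have "\<alpha> m j = int (k j)" if "j \<in> {1..n}" for j
    using adm that by (simp add: admissible_def)
  with W_sub W_dim W_nested W_x have "(\<lambda>j. if j \<in> {1..n} then sum_upto (\<lambda>i. W i j) m else {0})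
      \<in> fixed_flags s (stable_flags n k x) \<inter> P_alpha n k x m \<alpha>"
    by (rule flag_of_rows)
  then show ?thesis by blast
qed

end

theorem mainTheorem5:
  fixes x s :: "'a::{alg_closed_field, field_char_0}^'d^'d"
    and n m :: nat and k :: "nat \<Rightarrow> nat" and q :: 'a
    and \<alpha> :: "nat \<Rightarrow> nat \<Rightarrow> int"
  assumes k_mono: "\<And>j j'. 1 \<le> j \<Longrightarrow> j \<le> j' \<Longrightarrow> j' \<le> n \<Longrightarrow> k j \<le> k j'"
    and k_le: "\<And>j. j \<in> {1..n} \<Longrightarrow> k j \<le> CARD('d)"
    and nil: "nilp_order x m"
    and s_P: "s \<in> parabolic_of x"
    and s_ss: "semisimple_elt s"
    and s_levi: "levi_subgroup_of x m (centralizer s)"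
    and q_nz: "q \<noteq> 0"
    and s_x: "s ** x ** matrix_inv s = (\<chi> i j. q * x $ i $ j)"
  shows "(stable_flags n k x \<inter> P_alpha n k x m \<alpha> \<noteq> {} \<longleftrightarrow>
           fixed_flags s (stable_flags n k x) \<inter> P_alpha n k x m \<alpha> \<noteq> {})
       \<and> (stable_flags n k x \<inter> P_alpha n k x m \<alpha> \<noteq> {} \<longleftrightarrow>
           ((\<forall>i i' j j'. 1 \<le> i \<longrightarrow> i \<le> i' \<longrightarrow> i' \<le> m \<longrightarrow> 1 \<le> j \<longrightarrow> j \<le> j' \<longrightarrow> j' \<le> n \<longrightarrow>
                0 \<le> \<alpha> i j \<and> \<alpha> i j \<le> \<alpha> i' j') \<and>
            (\<forall>j\<in>{1..n}. \<alpha> m j = int (k j)) \<and>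
            (\<forall>i i' j j'. 2 \<le> i \<longrightarrow> i \<le> i' \<longrightarrow> i' \<le> m \<longrightarrow> 1 \<le> j' \<longrightarrow> j' \<le> j \<longrightarrow> j \<le> n \<longrightarrow>
                \<alpha> i' j' - \<alpha> (i' - 1) j' \<le> \<alpha> i j - \<alpha> (i - 1) j \<and>
                \<alpha> i j - \<alpha> (i - 1) j \<le> \<alpha> 1 j) \<and>
            (\<forall>i j. 2 \<le> i \<longrightarrow> i \<le> m \<longrightarrow> 1 \<le> j \<longrightarrow> j \<le> n \<longrightarrow>
                \<alpha> i j - \<alpha> (i - 1) j \<le> int (vec.dim (kerpow x i)) - int (vec.dim (kerpow x (i - 1)))) \<and>
            (\<forall>j\<in>{1..n}. \<alpha> 1 j \<le> int (vec.dim (kerpow x 1)))))"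
proof -
  have s_inv: "invertible s" using s_ss by (simp add: semisimple_elt_def)
  obtain U where U: "\<forall>i\<in>{1..m}. vec.subspace (U i) \<and> U i \<inter> kerpow x (i - 1) = {0} \<and>
                    {u + w | u w. u \<in> U i \<and> w \<in> kerpow x (i - 1)} = kerpow x i"
    and L: "centralizer s = {g \<in> GLA. \<forall>i\<in>{1..m}. (\<lambda>v. g *v v) ` U i = U i}"
    using s_levi unfolding levi_subgroup_of_def by blast
  interpret levi_splitting x s m U q
    using nil U L s_inv s_P conj_scalar_apply[OF s_inv s_x]
    by unfold_locales (auto simp: parabolic_of_def)
  have "stable_flags n k x \<inter> P_alpha n k x m \<alpha> \<noteq> {} \<Longrightarrow> admissible m n k x \<alpha>"
    using admissible_if_stable[OF nil] by blast
  moreover have "admissible m n k x \<alpha> \<Longrightarrow>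
      fixed_flags s (stable_flags n k x) \<inter> P_alpha n k x m \<alpha> \<noteq> {}"
    by (rule admissible_realised)
  moreover have "fixed_flags s (stable_flags n k x) \<subseteq> stable_flags n k x"
    by (auto simp: fixed_flags_def)
  ultimately show ?thesis
    unfolding admissible_def[symmetric] by blast
qed

end
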